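(* Let $n\ge1$, $K=U(n)$, $\underline{\lambda}=(\lambda_1\ge\dots\ge\lambda_{n+1})$, $\underline{\mu}=(\mu_1\ge\dots\ge\mu_n)$ with $\lambda_1\ge\mu_1\ge\lambda_2\ge\dots\ge\mu_n\ge\lambda_{n+1}$, and let $\tilde p$, $W_{(\underline{\lambda},\underline{\mu})}$, $\omega_{(\underline{\lambda},\underline{\mu})}$ and $\Psi$ be as in the context. Then for all $a,b\in T_{\tilde p}(K\cdot\tilde p)^\omega$, $$(\omega_\Lambda)_{\tilde p}(a,b)=\omega_{(\underline{\lambda},\underline{\mu})}(\Psi(a),\Psi(b));$$ that is, the symplectic form on $W_{(\underline{\lambda},\underline{\mu})}$ obtained by transporting the symplectic-slice form $\overline{\omega}_{\tilde p}$ through the isomorphism $\overline{\Psi}\colon W_{\tilde p}\to W_{(\underline{\lambda},\underline{\mu})}$ equals $\omega_{(\underline{\lambda},\underline{\mu})}$.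
   Context: Notation: for a finite real sequence $\underline{\tau}$, $[\underline{\tau}]$ is its set of distinct values, $\underline{\tau}_i$ the $i$-th largest element of $[\underline{\tau}]$, $m(\underline{\tau})=|[\underline{\tau}]|$, $n_v(\underline{\tau})$ the multiplicity of $v$. Shapes: for each value $v$ in $\underline{\lambda}$ or $\underline{\mu}$, the component labelled $v$ is an M-shape if $n_v(\underline{\mu})=n_v(\underline{\lambda})+1$, a W-shape if $n_v(\underline{\lambda})=n_v(\underline{\mu})+1$, a parallelogram-shape if $n_v(\underline{\lambda})=n_v(\underline{\mu})$. For $\mu\in[\underline{\mu}]$ with M-shape component, $r_\mu>0$ with $r_\mu^2=-\prod_{\lambda\in[\underline{\lambda}],\,\text{W}}(\mu-\lambda)\prod_{\tau\in[\underline{\mu}],\,\text{M},\,\tau\ne\mu}\frac{1}{\mu-\tau}$; otherwise $r_\mu=0$. For $\mu$ whose component is not an M-shape, $C_\mu=\sum_{i=1}^{n+1}\lambda_i-\sum_{i=1}^n\mu_i-\mu+\sum_{\tau\in[\underline{\mu}],\,\text{M}}\frac{r_\tau^2}{\mu-\tau}$ (nonzero for parallelogram-shapes). Setting: $\mathcal{O}_\Lambda$ is the set of $(n+1)\times(n+1)$ Hermitian matrices with eigenvalues $\lambda_1,\dots,\lambda_{n+1}$, with symplectic form $(\omega_\Lambda)_p([X,p],[Y,p])=\frac{1}{\sqrt{-1}}\mathrm{Tr}(p[X,Y])$, $X,Y\in\mathfrak{u}(n+1)$; $K$ acts by conjugation by $\mathrm{diag}(1,k)$. $\mathrm{M}=\mathrm{diag}(\mu_1,\dots,\mu_n)$,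 $c=\sum\lambda_i-\sum\mu_i$; for $\mu\in[\underline{\mu}]$ and $\mathbf{v}\in\mathbb{C}^n$, $\mathbf{v}_\mu\in\mathbb{C}^{n_\mu(\underline{\mu})}$ is the block of coordinates $j$ with $\mu_j=\mu$. $\tilde p=\begin{pmatrix}c&\mathbf{z}^\dagger\\ \mathbf{z}&\mathrm{M}\end{pmatrix}\in\mathcal{O}_\Lambda$ with $\mathbf{z}_\mu=(r_\mu,0,\dots,0)^T$ for each $\mu\in[\underline{\mu}]$. Elements of $T_{\tilde p}(K\cdot\tilde p)^\omega$ (the $\omega_\Lambda$-orthogonal complement of the $K$-orbit's tangent space) are Hermitian matrices $\begin{pmatrix}0&\mathbf{v}^\dagger\\ \mathbf{v}&0\end{pmatrix}$. $W_{(\underline{\lambda},\underline{\mu})}=\bigoplus_{\mu\in[\underline{\mu}],\,\text{parallelogram-shape}}\mathbb{C}^{n_\mu(\underline{\mu})}$ with $\omega_{(\underline{\lambda},\underline{\mu})}(\mathbf{u},\mathbf{w})=\frac{1}{\sqrt{-1}}\sum_{\mu\ \text{parallelogram}}\frac{-\mathbf{u}_\mu^\dagger\mathbf{w}_\mu+\mathbf{w}_\mu^\dagger\mathbf{u}_\mu}{C_\mu}$. $\Psi\colon T_{\tilde p}(K\cdot\tilde p)^\omega\to W_{(\underline{\lambda},\underline{\mu})}$ sends the matrix with lower-left block $\mathbf{v}$ to $(\mathbf{v}_\mu)_{\mu\ \text{parallelogram-shape}}$; it is surjective with kernel $T_{\tilde p}(K\cdot\tilde p)\cap T_{\tilde p}(K\cdot\tilde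 p)^\omega$, hence descends to a linear isomorphism $\overline{\Psi}$ from the symplectic slice $W_{\tilde p}=T_{\tilde p}(K\cdot\tilde p)^\omega/(T_{\tilde p}(K\cdot\tilde p)\cap T_{\tilde p}(K\cdot\tilde p)^\omega)$, whose symplectic form $\overline{\omega}_{\tilde p}$ is induced by $\omega_\Lambda$. *)

theory Defs
  imports Complex_Main "Jordan_Normal_Form.Schur_Decomposition"
begin

text \<open>lam is indexed by 1..n+1, mu by 1..n (as in the paper).\<close>

definition interlacing :: "nat \<Rightarrow> (nat \<Rightarrow> real) \<Rightarrow> (nat \<Rightarrow> real) \<Rightarrow> bool" where
  "interlacing n lam mu \<longleftrightarrow> (\<forall>i\<in>{1..n}. lam i \<ge> mu i \<and> mu i \<ge> lam (Suc i))"

definition lam_vals :: "nat \<Rightarrow> (nat \<Rightarrow> real) \<Rightarrow> real set" where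
  "lam_vals n lam = lam ` {1..n+1}"

definition mu_vals :: "nat \<Rightarrow> (nat \<Rightarrow> real) \<Rightarrow> real set" where
  "mu_vals n mu = mu ` {1..n}"

definition mult_lam :: "nat \<Rightarrow> (nat \<Rightarrow> real) \<Rightarrow> real \<Rightarrow> nat" where
  "mult_lam n lam v = card {i\<in>{1..n+1}. lam i = v}"

definition mult_mu :: "nat \<Rightarrow> (nat \<Rightarrow> real) \<Rightarrow> real \<Rightarrow> nat" where
  "mult_mu n mu v = card {i\<in>{1..n}. mu i = v}"

definition is_M :: "nat \<Rightarrow> (nat \<Rightarrow> real) \<Rightarrow> (nat \<Rightarrow> real) \<Rightarrow> real \<Rightarrow> bool" where
  "is_M n lam mu v \<longleftrightarrow> mult_mu n mu v = mult_lam n lam v + 1"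

definition is_W :: "nat \<Rightarrow> (nat \<Rightarrow> real) \<Rightarrow> (nat \<Rightarrow> real) \<Rightarrow> real \<Rightarrow> bool" where
  "is_W n lam mu v \<longleftrightarrow> mult_lam n lam v = mult_mu n mu v + 1"

definition is_P :: "nat \<Rightarrow> (nat \<Rightarrow> real) \<Rightarrow> (nat \<Rightarrow> real) \<Rightarrow> real \<Rightarrow> bool" where
  "is_P n lam mu v \<longleftrightarrow> mult_lam n lam v = mult_mu n mu v"

definition r_coef :: "nat \<Rightarrow> (nat \<Rightarrow> real) \<Rightarrow> (nat \<Rightarrow> real) \<Rightarrow> real \<Rightarrow> real" where
  "r_coef n lam mu m =
     (if m \<in> mu_vals n mu \<and> is_M n lam mu m then
        sqrt (- (\<Prod>l\<in>{l\<in>lam_vals n lam. is_W n lam mu l}. (m - l))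
               * (\<Prod>t\<in>{t\<in>mu_vals n mu. is_M n lam mu t \<and> t \<noteq> m}. 1 / (m - t)))
      else 0)"

definition c_const :: "nat \<Rightarrow> (nat \<Rightarrow> real) \<Rightarrow> (nat \<Rightarrow> real) \<Rightarrow> real" where
  "c_const n lam mu = (\<Sum>i=1..n+1. lam i) - (\<Sum>i=1..n. mu i)"

definition C_coef :: "nat \<Rightarrow> (nat \<Rightarrow> real) \<Rightarrow> (nat \<Rightarrow> real) \<Rightarrow> real \<Rightarrow> real" where
  "C_coef n lam mu m = c_const n lam mu - m
     + (\<Sum>t\<in>{t\<in>mu_vals n mu. is_M n lam mu t}. (r_coef n lam mu t)\<^sup>2 / (m - t))"

definition first_idx :: "nat \<Rightarrow> (nat \<Rightarrow> real) \<Rightarrow> real \<Rightarrow> nat" where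
  "first_idx n mu v = (LEAST j. j \<in> {1..n} \<and> mu j = v)"

definition z_vec :: "nat \<Rightarrow> (nat \<Rightarrow> real) \<Rightarrow> (nat \<Rightarrow> real) \<Rightarrow> nat \<Rightarrow> complex" where
  "z_vec n lam mu j =
     (if j = first_idx n mu (mu j) then complex_of_real (r_coef n lam mu (mu j)) else 0)"

text \<open>Matrix indices 0..n; row/column 0 is the first one, row/column j (1..n) carries mu j.\<close>
definition p_tilde :: "nat \<Rightarrow> (nat \<Rightarrow> real) \<Rightarrow> (nat \<Rightarrow> real) \<Rightarrow> complex mat" where
  "p_tilde n lam mu = mat (n+1) (n+1) (\<lambda>(i,j).
     if i = 0 \<and> j = 0 then complex_of_real (c_const n lam mu)
     else if i = 0 then cnj (z_vec n lam mu j)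
     else if j = 0 then z_vec n lam mu i
     else if i = j then complex_of_real (mu i) else 0)"

definition mtrace :: "complex mat \<Rightarrow> complex" where
  "mtrace A = (\<Sum>i<dim_row A. A $$ (i,i))"

definition comm :: "complex mat \<Rightarrow> complex mat \<Rightarrow> complex mat" where
  "comm X Y = X * Y - Y * X"

definition u_alg :: "nat \<Rightarrow> complex mat set" where
  "u_alg N = {X. X \<in> carrier_mat N N \<and> mat_adjoint X = - X}"

definition tangent_orbit :: "complex mat \<Rightarrow> complex mat set" where
  "tangent_orbit p = {comm X p | X. X \<in> u_alg (dim_row p)}"

text \<open>(omega_Lambda)_p([X,p],[Y,p]) = (1/i) Tr(p[X,Y]) (X, Y any representatives).\<close>
definition omega_KKS :: "complex mat \<Rightarrow> complex mat \<Rightarrow> complex mat \<Rightarrow> complex" where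
  "omega_KKS p a b =
     (let X = (SOME X. X \<in> u_alg (dim_row p) \<and> comm X p = a);
          Y = (SOME Y. Y \<in> u_alg (dim_row p) \<and> comm Y p = b)
      in (1 / \<i>) * mtrace (p * comm X Y))"

definition k_alg :: "nat \<Rightarrow> complex mat set" where
  "k_alg n = {four_block_mat (0\<^sub>m 1 1) (0\<^sub>m 1 n) (0\<^sub>m n 1) k | k. k \<in> u_alg n}"

definition tangent_K_orbit :: "nat \<Rightarrow> complex mat \<Rightarrow> complex mat set" where
  "tangent_K_orbit n p = {comm \<xi> p | \<xi>. \<xi> \<in> k_alg n}"

definition tangent_K_perp :: "nat \<Rightarrow> complex mat \<Rightarrow> complex mat set" where
  "tangent_K_perp n p =
     {a \<in> tangent_orbit p. \<forall>t \<in> tangent_K_orbit n p. omega_KKS p a t = 0}"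

text \<open>An element of W is represented as a function from parallelogram values mu to
  vectors in C^{n_mu(mu)}; Psi a sends a to its lower-left block v, split into blocks.\<close>
definition Psi :: "nat \<Rightarrow> (nat \<Rightarrow> real) \<Rightarrow> (nat \<Rightarrow> real) \<Rightarrow> complex mat \<Rightarrow> real \<Rightarrow> complex vec" where
  "Psi n lam mu a = (\<lambda>m. if m \<in> mu_vals n mu \<and> is_P n lam mu m
      then vec (mult_mu n mu m) (\<lambda>k. a $$ (first_idx n mu m + k, 0))
      else vec 0 (\<lambda>_. 0))"

definition cdot :: "complex vec \<Rightarrow> complex vec \<Rightarrow> complex" where
  "cdot u w = (\<Sum>k<dim_vec u. cnj (u $ k) * w $ k)"

definition omega_W :: "nat \<Rightarrow> (nat \<Rightarrow> real) \<Rightarrow> (nat \<Rightarrow> real)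
    \<Rightarrow> (real \<Rightarrow> complex vec) \<Rightarrow> (real \<Rightarrow> complex vec) \<Rightarrow> complex" where
  "omega_W n lam mu u w = (1 / \<i>) *
     (\<Sum>m\<in>{m\<in>mu_vals n mu. is_P n lam mu m}.
        (- cdot (u m) (w m) + cdot (w m) (u m)) / complex_of_real (C_coef n lam mu m))"

end

theory Submission
  imports Defs
begin

text \<open>Write \<open>a = [X, p]\<close>, \<open>b = [Y, p]\<close> with \<open>X, Y\<close> skew-Hermitian, so that
  \<open>\<omega>(a, b) = Tr(X [Y, p]) / \<i>\<close>. Pairing \<open>a\<close> with \<open>[\<xi>, p]\<close> for elementary skew-Hermitian
  \<open>\<xi>\<close> in the Lie algebra of \<open>K\<close> shows that orthogonality to the \<open>K\<close>-orbit forces the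
  lower-right \<open>n \<times> n\<close> block of \<open>a\<close> to vanish; the trace then only involves first columns,
  \<open>\<Sum>\<^sub>j X\<^sub>j\<^sub>0 conj(b\<^sub>j\<^sub>0) - conj(X\<^sub>j\<^sub>0) b\<^sub>j\<^sub>0\<close>. The block equations
  \<open>[X, p]\<^sub>j\<^sub>k = 0\<close> give \<open>a\<^sub>j\<^sub>0 = C(\<mu>\<^sub>j) X\<^sub>j\<^sub>0\<close> whenever \<open>\<mu>\<^sub>j\<close> is not an M-value.
  At W-values \<open>C\<close> vanishes by a divided difference identity over the M-values, and at
  M-values the entries involved are imaginary or zero. So only parallelogram values
  contribute, each with \<open>(conj(b\<^sub>j\<^sub>0) a\<^sub>j\<^sub>0 - conj(a\<^sub>j\<^sub>0) b\<^sub>j\<^sub>0) / C(\<mu>\<^sub>j)\<close>.\<close>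

section \<open>Divided differences\<close>

definition divided_diff :: "real set \<Rightarrow> (real \<Rightarrow> real) \<Rightarrow> real" where
  "divided_diff T f = (\<Sum>t\<in>T. f t / (\<Prod>s\<in>T - {t}. (t - s)))"

lemma divided_diff_diff: "divided_diff T (\<lambda>x. f x - g x) = divided_diff T f - divided_diff T g"
  unfolding divided_diff_def by (simp add: diff_divide_distrib sum_subtractf)

lemma divided_diff_add: "divided_diff T (\<lambda>x. f x + g x) = divided_diff T f + divided_diff T g"
  unfolding divided_diff_def by (simp add: add_divide_distrib sum.distrib)

lemma divided_diff_cmult: "divided_diff T (\<lambda>x. c * f x) = c * divided_diff T f"
  unfolding divided_diff_def by (simp add: sum_distrib_left)

lemma divided_diff_linear_factor:
  assumes "finite T" "a \<in> T"
  shows "divided_diff T (\<lambda>x. (x - a) * f x) = divided_diff (T - {a}) f"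
proof -
  have "divided_diff T (\<lambda>x. (x - a) * f x) = (\<Sum>t\<in>T - {a}. (t - a) * f t / (\<Prod>s\<in>T - {t}. (t - s)))"
    unfolding divided_diff_def using assms by (simp add: sum.remove)
  also have "\<dots> = (\<Sum>t\<in>T - {a}. f t / (\<Prod>s\<in>T - {a} - {t}. (t - s)))"
  proof (rule sum.cong)
    fix t assume t: "t \<in> T - {a}"
    have "T - {t} = insert a (T - {a} - {t})" using t assms by auto
    then have "(\<Prod>s\<in>T - {t}. (t - s)) = (t - a) * (\<Prod>s\<in>T - {a} - {t}. (t - s))"
      using assms by simp
    then show "(t - a) * f t / (\<Prod>s\<in>T - {t}. (t - s)) = f t / (\<Prod>s\<in>T - {a} - {t}. (t - s))"
      using t by simp
  qed simp
  finally show ?thesis unfolding divided_diff_def .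
qed

lemma divided_diff_one:
  assumes "finite T"
  shows "divided_diff T (\<lambda>_. 1) = (if card T = 1 then 1 else 0)"
  using assms
proof (induction "card T" arbitrary: T rule: less_induct)
  case less
  show ?case
  proof (cases "card T \<le> 1")
    case True
    then consider "T = {}" | x where "T = {x}"
      using less.prems by (metis card_0_eq card_1_singletonE le_Suc_eq One_nat_def le_zero_eq)
    then show ?thesis by cases (simp_all add: divided_diff_def)
  next
    case False
    then obtain a b where ab: "a \<in> T" "b \<in> T" "a \<noteq> b"
      by (metis One_nat_def card.empty card.infinite card_le_Suc0_iff_eq le_zero_eq nat_le_linear)
    have IH: "divided_diff (T - {t}) (\<lambda>_. 1) = (if card T - 1 = 1 then 1 else 0)" if "t \<in> T" for t
      using less.hyps[of "T - {t}"] less.prems that False by auto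
    \<comment> \<open>Since \<open>a - b = (x - b) - (x - a)\<close>, the two removals of a node give the same value.\<close>
    have "(a - b) * divided_diff T (\<lambda>_. 1) = divided_diff T (\<lambda>x. (x - b) * 1 - (x - a) * 1)"
      by (simp add: divided_diff_cmult[symmetric] algebra_simps)
    also have "\<dots> = 0"
      unfolding divided_diff_diff divided_diff_linear_factor[OF less.prems ab(1)]
        divided_diff_linear_factor[OF less.prems ab(2)] IH[OF ab(1)] IH[OF ab(2)] by simp
    finally show ?thesis using ab False by simp
  qed
qed

lemma divided_diff_prod_linear:
  assumes "finite R" "finite T" "card R \<le> card T"
  shows "divided_diff T (\<lambda>x. \<Prod>l\<in>R. (x - l)) =
    (if card R = card T then \<Sum>T - \<Sum>R else if card R + 1 = card T then 1 else 0)"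
  using assms
proof (induction R arbitrary: T rule: finite_induct)
  case empty
  then show ?case
    using divided_diff_one[OF empty(1)] by (cases "T = {}") (simp_all add: divided_diff_def)
next
  case (insert l R)
  then obtain a where a: "a \<in> T" by fastforce
  let ?g = "\<lambda>x. \<Prod>l\<in>R. (x - l)"
  have "divided_diff T (\<lambda>x. \<Prod>l'\<in>insert l R. (x - l'))
      = divided_diff T (\<lambda>x. (x - a) * ?g x + (a - l) * ?g x)"
    using insert by (simp add: algebra_simps)
  also have "\<dots> = divided_diff (T - {a}) ?g + (a - l) * divided_diff T ?g"
    by (simp add: divided_diff_add divided_diff_cmult divided_diff_linear_factor[OF insert.prems(1) a])
  finally show ?case
    using insert.IH[of "T - {a}"] insert.IH[of T] insert a by (auto simp: sum_diff1)
qed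

section \<open>Traces, commutators and skew-Hermitian matrices\<close>

lemma index_mult_mat_sum:
  assumes "A \<in> carrier_mat nr m" "B \<in> carrier_mat m nc" "i < nr" "j < nc"
  shows "(A * B) $$ (i,j) = (\<Sum>k<m. A $$ (i,k) * B $$ (k,j))"
  using assms by (simp add: scalar_prod_def atLeast0LessThan)

lemma sum_lessThan_Suc_eq_0_plus: "(\<Sum>k<Suc n. f k) = f 0 + (\<Sum>k=1..n. f k)"
proof -
  have "{..<Suc n} = insert 0 {1..n}" by auto
  then show ?thesis by simp
qed

lemma index_mat_adjoint:
  assumes "i < dim_col A" "j < dim_row A"
  shows "mat_adjoint A $$ (i,j) = cnj (A $$ (j,i))"
  using assms unfolding mat_adjoint_def by (simp add: mat_of_rows_index cols_nth)

lemma u_alg_carrier: "X \<in> u_alg N \<Longrightarrow> X \<in> carrier_mat N N"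
  unfolding u_alg_def by auto

lemma u_alg_skew:
  assumes "X \<in> u_alg N" "i < N" "j < N"
  shows "X $$ (i,j) = - cnj (X $$ (j,i))"
proof -
  have X: "X \<in> carrier_mat N N" "mat_adjoint X = - X" using assms unfolding u_alg_def by auto
  have "cnj (X $$ (j,i)) = mat_adjoint X $$ (i,j)"
    using X(1) assms by (simp add: index_mat_adjoint)
  also have "\<dots> = - X $$ (i,j)" using X assms by simp
  finally show ?thesis by simp
qed

lemma u_alg_diag_Re: "X \<in> u_alg N \<Longrightarrow> i < N \<Longrightarrow> Re (X $$ (i,i)) = 0"
  using u_alg_skew[of X N i i] by (simp add: complex_eq_iff)

lemma u_algI:
  assumes X: "X \<in> carrier_mat N N" and skew: "\<And>i j. i < N \<Longrightarrow> j < N \<Longrightarrow> X $$ (i,j) = - cnj (X $$ (j,i))"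
  shows "X \<in> u_alg N"
proof -
  have "mat_adjoint X = - X"
  proof (rule eq_matI)
    fix i j assume "i < dim_row (- X)" "j < dim_col (- X)"
    then have ij: "i < N" "j < N" using X by auto
    then show "mat_adjoint X $$ (i,j) = (- X) $$ (i,j)"
      using X skew[OF ij(2,1)] by (simp add: index_mat_adjoint)
  qed (use X in \<open>simp_all add: mat_adjoint_def\<close>)
  then show ?thesis using X unfolding u_alg_def by auto
qed

lemma comm_carrier: "A \<in> carrier_mat N N \<Longrightarrow> B \<in> carrier_mat N N \<Longrightarrow> comm A B \<in> carrier_mat N N"
  unfolding comm_def by auto

lemma index_comm_sum:
  assumes "A \<in> carrier_mat N N" "B \<in> carrier_mat N N" "i < N" "j < N"
  shows "comm A B $$ (i,j) = (\<Sum>k<N. A $$ (i,k) * B $$ (k,j)) - (\<Sum>k<N. B $$ (i,k) * A $$ (k,j))"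
proof -
  have "comm A B $$ (i,j) = (A * B) $$ (i,j) - (B * A) $$ (i,j)"
    using assms unfolding comm_def by (intro index_minus_mat(1)) auto
  then show ?thesis unfolding index_mult_mat_sum[OF assms] index_mult_mat_sum[OF assms(2,1,3,4)] .
qed

lemma comm_u_alg_hermitian:
  assumes X: "X \<in> u_alg N" and P: "P \<in> carrier_mat N N"
    and herm: "\<And>i j. i < N \<Longrightarrow> j < N \<Longrightarrow> P $$ (i,j) = cnj (P $$ (j,i))"
    and ij: "i < N" "j < N"
  shows "comm X P $$ (i,j) = cnj (comm X P $$ (j,i))"
proof -
  have Xc: "X \<in> carrier_mat N N" using X by (rule u_alg_carrier)
  have "cnj (X $$ (j,k) * P $$ (k,i)) = - (P $$ (i,k) * X $$ (k,j))"
    and "cnj (P $$ (j,k) * X $$ (k,i)) = - (X $$ (i,k) * P $$ (k,j))" if "k < N" for k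
    using u_alg_skew[OF X ij(1) that] u_alg_skew[OF X that ij(2)] herm[OF ij(1) that] herm[OF that ij(2)]
    by (simp_all add: mult.commute)
  then show ?thesis
    unfolding index_comm_sum[OF Xc P ij] index_comm_sum[OF Xc P ij(2,1)]
    by (simp add: cnj_sum sum_negf)
qed

lemma mtrace_mult:
  assumes "A \<in> carrier_mat N N" "B \<in> carrier_mat N N"
  shows "mtrace (A * B) = (\<Sum>i<N. \<Sum>k<N. A $$ (i,k) * B $$ (k,i))"
proof -
  have "(A * B) $$ (i,i) = (\<Sum>k<N. A $$ (i,k) * B $$ (k,i))" if "i < N" for i
    by (rule index_mult_mat_sum[OF assms that that])
  then show ?thesis unfolding mtrace_def using assms by simp
qed

lemma mtrace_mult_commute:
  assumes "A \<in> carrier_mat N N" "B \<in> carrier_mat N N"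
  shows "mtrace (A * B) = mtrace (B * A)"
  unfolding mtrace_mult[OF assms] mtrace_mult[OF assms(2,1)]
  by (subst sum.swap) (simp add: mult.commute)

lemma mtrace_diff:
  assumes "A \<in> carrier_mat N N" "B \<in> carrier_mat N N"
  shows "mtrace (A - B) = mtrace A - mtrace B"
  using assms unfolding mtrace_def by (simp add: sum_subtractf)

lemma mtrace_comm:
  assumes "A \<in> carrier_mat N N" "B \<in> carrier_mat N N"
  shows "mtrace (comm A B) = 0"
  using mtrace_diff[of "A * B" N "B * A"] mtrace_mult_commute[OF assms] assms unfolding comm_def by simp

lemma mtrace_mult_diff:
  assumes P: "P \<in> carrier_mat N N" and A: "A \<in> carrier_mat N N" and B: "B \<in> carrier_mat N N"
  shows "mtrace (P * (A - B)) = mtrace (P * A) - mtrace (P * B)"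
    and "mtrace ((A - B) * P) = mtrace (A * P) - mtrace (B * P)"
proof -
  have "P * (A - B) = P * A - P * B" "(A - B) * P = A * P - B * P"
    using mult_minus_distrib_mat[OF P A B] minus_mult_distrib_mat[OF A B P] .
  moreover have "P * A \<in> carrier_mat N N" "P * B \<in> carrier_mat N N"
    "A * P \<in> carrier_mat N N" "B * P \<in> carrier_mat N N" using P A B by auto
  ultimately show "mtrace (P * (A - B)) = mtrace (P * A) - mtrace (P * B)"
    and "mtrace ((A - B) * P) = mtrace (A * P) - mtrace (B * P)"
    using mtrace_diff by metis+
qed

lemma mtrace_mult_comm_rotate:
  assumes P: "P \<in> carrier_mat N N" and A: "A \<in> carrier_mat N N" and B: "B \<in> carrier_mat N N"
  shows "mtrace (P * comm A B) = mtrace (A * comm B P)"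
proof -
  have "mtrace (P * comm A B) = mtrace (P * (A * B)) - mtrace (P * (B * A))"
    unfolding comm_def using P A B by (intro mtrace_mult_diff) auto
  also have "mtrace (P * (A * B)) = mtrace (A * (B * P))"
    using mtrace_mult_commute[of P N "A * B"] P A B by simp
  also have "mtrace (P * (B * A)) = mtrace (A * (P * B))"
    using mtrace_mult_commute[of "P * B" N A] P A B by simp
  also have "mtrace (A * (B * P)) - mtrace (A * (P * B)) = mtrace (A * comm B P)"
    unfolding comm_def using P A B by (intro mtrace_mult_diff(1)[symmetric]) auto
  finally show ?thesis .
qed

lemma mtrace_mult_comm_swap:
  assumes P: "P \<in> carrier_mat N N" and A: "A \<in> carrier_mat N N" and B: "B \<in> carrier_mat N N"
  shows "mtrace (A * comm B P) = - mtrace (comm A P * B)"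
proof -
  have "mtrace (A * comm B P) = mtrace (A * (B * P)) - mtrace (A * (P * B))"
    unfolding comm_def using P A B by (intro mtrace_mult_diff) auto
  also have "mtrace (A * (B * P)) = mtrace (P * A * B)"
    using mtrace_mult_commute[of "A * B" N P] P A B by simp
  also have "mtrace (A * (P * B)) = mtrace (A * P * B)"
    using P A B by simp
  also have "mtrace (P * A * B) - mtrace (A * P * B) = - mtrace (comm A P * B)"
    unfolding comm_def using P A B mtrace_mult_diff(2)[of B N "A * P" "P * A"] by simp
  finally show ?thesis .
qed

text \<open>The representatives picked by \<open>SOME\<close> in \<open>omega_KKS\<close> are irrelevant: by
  \<open>Tr(P [X, Y]) = Tr(X [Y, P]) = - Tr([X, P] Y)\<close> each of them can be traded for any other
  with the same commutator.\<close>

lemma omega_KKS_comm: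
  assumes P: "P \<in> carrier_mat N N" and X: "X \<in> u_alg N" and Y: "Y \<in> u_alg N"
  shows "omega_KKS P (comm X P) (comm Y P) = (1 / \<i>) * mtrace (X * comm Y P)"
proof -
  define X' where "X' = (SOME X'. X' \<in> u_alg (dim_row P) \<and> comm X' P = comm X P)"
  define Y' where "Y' = (SOME Y'. Y' \<in> u_alg (dim_row P) \<and> comm Y' P = comm Y P)"
  have dim: "dim_row P = N" using P by simp
  have "X' \<in> u_alg N \<and> comm X' P = comm X P"
    unfolding X'_def dim by (rule someI[of _ X]) (use X in simp)
  moreover have "Y' \<in> u_alg N \<and> comm Y' P = comm Y P"
    unfolding Y'_def dim by (rule someI[of _ Y]) (use Y in simp)
  ultimately have X': "X' \<in> carrier_mat N N" "comm X' P = comm X P"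
    and Y': "Y' \<in> carrier_mat N N" "comm Y' P = comm Y P" using u_alg_carrier by auto
  have Xc: "X \<in> carrier_mat N N" using X by (rule u_alg_carrier)
  have "mtrace (P * comm X' Y') = - mtrace (comm X' P * Y')"
    using mtrace_mult_comm_rotate[OF P X'(1) Y'(1)] mtrace_mult_comm_swap[OF P X'(1) Y'(1)] by simp
  also have "\<dots> = mtrace (X * comm Y P)"
    using mtrace_mult_comm_swap[OF P Xc Y'(1)] X'(2) Y'(2) by simp
  finally show ?thesis
    unfolding omega_KKS_def Let_def X'_def[symmetric] Y'_def[symmetric] by simp
qed

definition skew_unit :: "nat \<Rightarrow> nat \<Rightarrow> nat \<Rightarrow> complex \<Rightarrow> complex mat" where
  "skew_unit N J K al = mat N N (\<lambda>(i,k).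
     (if i = J \<and> k = K then al else 0) + (if i = K \<and> k = J then - cnj al else 0))"

lemma skew_unit_carrier: "skew_unit N J K al \<in> carrier_mat N N"
  unfolding skew_unit_def by simp

lemma dim_skew_unit [simp]:
  "dim_row (skew_unit N J K al) = N" "dim_col (skew_unit N J K al) = N"
  unfolding skew_unit_def by simp_all

lemma index_skew_unit:
  "i < N \<Longrightarrow> k < N \<Longrightarrow>
    skew_unit N J K al $$ (i,k) = (if i = J \<and> k = K then al else 0) + (if i = K \<and> k = J then - cnj al else 0)"
  unfolding skew_unit_def by simp

lemma if_skew_pair:
  fixes al :: complex
  shows "(if P then al else 0) + (if Q then - cnj al else 0)
    = - cnj ((if Q then al else 0) + (if P then - cnj al else 0))"
  by (cases P; cases Q) simp_all

lemma skew_unit_u_alg: "skew_unit N J K al \<in> u_alg N"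
proof (rule u_algI[OF skew_unit_carrier])
  fix i j assume ij: "i < N" "j < N"
  have swap: "(j = J \<and> i = K) = (i = K \<and> j = J)" "(j = K \<and> i = J) = (i = J \<and> j = K)"
    by (rule conj_commute)+
  show "skew_unit N J K al $$ (i,j) = - cnj (skew_unit N J K al $$ (j,i))"
    unfolding index_skew_unit[OF ij] index_skew_unit[OF ij(2,1)] swap by (rule if_skew_pair)
qed

lemma sum_sum_delta:
  fixes f :: "nat \<Rightarrow> nat \<Rightarrow> 'a::comm_ring_1"
  assumes "J < N" "K < N"
  shows "(\<Sum>i<N. \<Sum>k<N. f i k * (if k = J \<and> i = K then c else 0)) = f K J * c"
proof -
  have "(\<Sum>k<N. f i k * (if k = J \<and> i = K then c else 0)) = (if i = K then f i J * c else 0)" for i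
  proof (cases "i = K")
    case True
    then have "(\<Sum>k<N. f i k * (if k = J \<and> i = K then c else 0)) = (\<Sum>k<N. if k = J then f i k * c else 0)"
      by (intro sum.cong) simp_all
    then show ?thesis using True assms(1) by (simp add: sum.delta)
  qed simp
  then show ?thesis using assms(2) by (simp add: sum.delta)
qed

lemma mtrace_mult_skew_unit:
  assumes A: "A \<in> carrier_mat N N" and J: "J < N" and K: "K < N"
  shows "mtrace (A * skew_unit N J K al) = A $$ (K,J) * al - A $$ (J,K) * cnj al"
proof -
  have "mtrace (A * skew_unit N J K al)
      = (\<Sum>i<N. \<Sum>k<N. A $$ (i,k) * (if k = J \<and> i = K then al else 0))
        + (\<Sum>i<N. \<Sum>k<N. A $$ (i,k) * (if k = K \<and> i = J then - cnj al else 0))"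
    unfolding mtrace_mult[OF A skew_unit_carrier] sum.distrib[symmetric]
  proof (intro sum.cong refl)
    fix i k assume "i \<in> {..<N}" "k \<in> {..<N}"
    then have ki: "k < N" "i < N" by auto
    show "A $$ (i,k) * skew_unit N J K al $$ (k,i) = A $$ (i,k) * (if k = J \<and> i = K then al else 0)
        + A $$ (i,k) * (if k = K \<and> i = J then - cnj al else 0)"
      unfolding index_skew_unit[OF ki] distrib_left by (rule refl)
  qed
  also have "\<dots> = A $$ (K,J) * al - A $$ (J,K) * cnj al"
    unfolding sum_sum_delta[OF J K] sum_sum_delta[OF K J] by simp
  finally show ?thesis .
qed

section \<open>Interlacing sequences\<close>

lemma prod_pos_iff_even_card_neg:
  fixes g :: "'a \<Rightarrow> real"
  assumes "finite S" "\<forall>s\<in>S. g s \<noteq> 0"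
  shows "0 < prod g S \<longleftrightarrow> even (card {s\<in>S. g s < 0})"
  using assms
proof (induction S rule: finite_induct)
  case (insert x F)
  have "{s\<in>insert x F. g s < 0} = (if g x < 0 then insert x {s\<in>F. g s < 0} else {s\<in>F. g s < 0})"
    by auto
  then have "card {s\<in>insert x F. g s < 0} = (if g x < 0 then Suc (card {s\<in>F. g s < 0}) else card {s\<in>F. g s < 0})"
    using insert by simp
  moreover have "prod g F \<noteq> 0" "g x \<noteq> 0" using insert by auto
  ultimately show ?case using insert zero_less_mult_iff[of "g x" "prod g F"] by auto
qed simp

lemma sum_comp_eq_sum_image_card:
  fixes f :: "'b \<Rightarrow> 'c::comm_semiring_1"
  assumes "finite I"
  shows "(\<Sum>i\<in>I. f (g i)) = (\<Sum>v\<in>g ` I. f v * of_nat (card {i\<in>I. g i = v}))"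
  using assms by (subst sum.image_gen[of I _ g]) (simp_all add: mult.commute)

locale interlacing_pair =
  fixes n :: nat and lam mu :: "nat \<Rightarrow> real"
  assumes interlacing: "interlacing n lam mu"
begin

lemma mu_le_lam: "i \<in> {1..n} \<Longrightarrow> mu i \<le> lam i"
  and lam_Suc_le_mu: "i \<in> {1..n} \<Longrightarrow> lam (Suc i) \<le> mu i"
  using interlacing unfolding interlacing_def by auto

lemma mu_antimono: "i \<in> {1..n} \<Longrightarrow> j \<in> {1..n} \<Longrightarrow> i \<le> j \<Longrightarrow> mu j \<le> mu i"
proof (induction j rule: nat_induct)
  case (Suc j)
  then show ?case
    using mu_le_lam[of "Suc j"] lam_Suc_le_mu[of j] by (cases "i = Suc j") force+
qed simp

definition count_lam :: "(real \<Rightarrow> bool) \<Rightarrow> nat" where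
  "count_lam P = card {i\<in>{1..n+1}. P (lam i)}"

definition count_mu :: "(real \<Rightarrow> bool) \<Rightarrow> nat" where
  "count_mu P = card {i\<in>{1..n}. P (mu i)}"

text \<open>For an upward closed \<open>P\<close>, the interlacing inequalities match
  \<open>lam i\<close> with \<open>mu i\<close> and \<open>mu i\<close> with \<open>lam (i + 1)\<close>.\<close>

lemma count_mu_le_count_lam:
  assumes "\<And>y y'. P y \<Longrightarrow> y \<le> y' \<Longrightarrow> P y'"
  shows "count_mu P \<le> count_lam P"
proof -
  have "{i\<in>{1..n}. P (mu i)} \<subseteq> {i\<in>{1..n+1}. P (lam i)}"
    using assms mu_le_lam by auto
  then show ?thesis unfolding count_mu_def count_lam_def by (intro card_mono) auto
qed

lemma count_lam_le_Suc_count_mu: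
  assumes "\<And>y y'. P y \<Longrightarrow> y \<le> y' \<Longrightarrow> P y'"
  shows "count_lam P \<le> Suc (count_mu P)"
proof -
  have "{i\<in>{1..n+1}. P (lam i)} \<subseteq> insert 1 (Suc ` {i\<in>{1..n}. P (mu i)})"
  proof
    fix i assume i: "i \<in> {i\<in>{1..n+1}. P (lam i)}"
    show "i \<in> insert 1 (Suc ` {i\<in>{1..n}. P (mu i)})"
    proof (cases "i = 1")
      case False
      then have j: "i = Suc (i - 1)" "i - 1 \<in> {1..n}" using i by auto
      then have "P (mu (i - 1))" using assms[of "lam i"] lam_Suc_le_mu[of "i - 1"] i by auto
      then show ?thesis using j by (metis (no_types, lifting) image_eqI insertI2 mem_Collect_eq)
    qed simp
  qed
  then have "count_lam P \<le> card (insert 1 (Suc ` {i\<in>{1..n}. P (mu i)}))"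
    unfolding count_lam_def by (intro card_mono) auto
  also have "\<dots> \<le> Suc (card (Suc ` {i\<in>{1..n}. P (mu i)}))"
    by (simp add: card_insert_le_m1 card_insert_if)
  also have "\<dots> \<le> Suc (count_mu P)" unfolding count_mu_def by (simp add: card_image_le)
  finally show ?thesis .
qed

lemma mult_lam_eq_count_diff: "mult_lam n lam v = count_lam (\<lambda>x. v \<le> x) - count_lam (\<lambda>x. v < x)"
proof -
  have "{i\<in>{1..n+1}. lam i = v} = {i\<in>{1..n+1}. v \<le> lam i} - {i\<in>{1..n+1}. v < lam i}" by auto
  then show ?thesis unfolding mult_lam_def count_lam_def by (simp add: card_Diff_subset subset_iff)
qed

lemma mult_mu_eq_count_diff: "mult_mu n mu v = count_mu (\<lambda>x. v \<le> x) - count_mu (\<lambda>x. v < x)"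
proof -
  have "{i\<in>{1..n}. mu i = v} = {i\<in>{1..n}. v \<le> mu i} - {i\<in>{1..n}. v < mu i}" by auto
  then show ?thesis unfolding mult_mu_def count_mu_def by (simp add: card_Diff_subset subset_iff)
qed

lemma count_bounds:
  "count_mu (\<lambda>x. v \<le> x) \<le> count_lam (\<lambda>x. v \<le> x)" "count_lam (\<lambda>x. v \<le> x) \<le> Suc (count_mu (\<lambda>x. v \<le> x))"
  "count_mu (\<lambda>x. v < x) \<le> count_lam (\<lambda>x. v < x)" "count_lam (\<lambda>x. v < x) \<le> Suc (count_mu (\<lambda>x. v < x))"
  by (rule count_mu_le_count_lam count_lam_le_Suc_count_mu; force)+

lemma count_strict_le:
  "count_lam (\<lambda>x. v < x) \<le> count_lam (\<lambda>x. v \<le> x)" "count_mu (\<lambda>x. v < x) \<le> count_mu (\<lambda>x. v \<le> x)"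
  unfolding count_lam_def count_mu_def by (auto intro!: card_mono)

lemma shape_cases: "is_M n lam mu v \<or> is_W n lam mu v \<or> is_P n lam mu v"
  unfolding is_M_def is_W_def is_P_def mult_lam_eq_count_diff mult_mu_eq_count_diff
  using count_bounds[of v] count_strict_le[of v] by linarith

lemma count_lam_above_M: "is_M n lam mu t \<Longrightarrow> count_lam (\<lambda>x. t < x) = Suc (count_mu (\<lambda>x. t < x))"
  unfolding is_M_def mult_lam_eq_count_diff mult_mu_eq_count_diff
  using count_bounds[of t] count_strict_le[of t] by linarith

lemma shapes_exclusive:
  "is_M n lam mu v \<Longrightarrow> \<not> is_W n lam mu v" "is_M n lam mu v \<Longrightarrow> \<not> is_P n lam mu v"
  "is_W n lam mu v \<Longrightarrow> \<not> is_P n lam mu v"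
  unfolding is_M_def is_W_def is_P_def by auto

lemma mult_lam_minus_mult_mu:
  "real (mult_lam n lam v) - real (mult_mu n mu v)
    = (if is_W n lam mu v then 1 else 0) - (if is_M n lam mu v then 1 else 0)"
  using shape_cases[of v] shapes_exclusive[of v] unfolding is_M_def is_W_def is_P_def by auto

abbreviation "W_vals \<equiv> {l\<in>lam_vals n lam. is_W n lam mu l}"
abbreviation "M_vals \<equiv> {t\<in>mu_vals n mu. is_M n lam mu t}"

lemma finite_lam_vals: "finite (lam_vals n lam)" and finite_mu_vals: "finite (mu_vals n mu)"
  unfolding lam_vals_def mu_vals_def by auto

lemma mult_lam_eq_0: "v \<notin> lam_vals n lam \<Longrightarrow> mult_lam n lam v = 0"
  and mult_mu_eq_0: "v \<notin> mu_vals n mu \<Longrightarrow> mult_mu n mu v = 0"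
  unfolding lam_vals_def mult_lam_def mu_vals_def mult_mu_def by auto

lemma W_in_lam_vals: "is_W n lam mu v \<Longrightarrow> v \<in> lam_vals n lam"
  and M_in_mu_vals: "is_M n lam mu v \<Longrightarrow> v \<in> mu_vals n mu"
  using mult_lam_eq_0 mult_mu_eq_0 unfolding is_W_def is_M_def by fastforce+

lemma sum_lam_minus_sum_mu:
  fixes f :: "real \<Rightarrow> real"
  shows "(\<Sum>i=1..n+1. f (lam i)) - (\<Sum>i=1..n. f (mu i)) = sum f W_vals - sum f M_vals"
proof -
  let ?V = "lam_vals n lam \<union> mu_vals n mu"
  have finV: "finite ?V" using finite_lam_vals finite_mu_vals by simp
  have "(\<Sum>i=1..n+1. f (lam i)) = (\<Sum>v\<in>lam_vals n lam. f v * real (mult_lam n lam v))"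
    unfolding lam_vals_def mult_lam_def by (rule sum_comp_eq_sum_image_card) simp
  also have "\<dots> = (\<Sum>v\<in>?V. f v * real (mult_lam n lam v))"
    by (rule sum.mono_neutral_left) (auto simp: finite_lam_vals finite_mu_vals mult_lam_eq_0)
  finally have lam: "(\<Sum>i=1..n+1. f (lam i)) = (\<Sum>v\<in>?V. f v * real (mult_lam n lam v))" .
  have "(\<Sum>i=1..n. f (mu i)) = (\<Sum>v\<in>mu_vals n mu. f v * real (mult_mu n mu v))"
    unfolding mu_vals_def mult_mu_def by (rule sum_comp_eq_sum_image_card) simp
  also have "\<dots> = (\<Sum>v\<in>?V. f v * real (mult_mu n mu v))"
    by (rule sum.mono_neutral_left) (auto simp: finite_lam_vals finite_mu_vals mult_mu_eq_0)
  finally have mu: "(\<Sum>i=1..n. f (mu i)) = (\<Sum>v\<in>?V. f v * real (mult_mu n mu v))" .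
  have "(\<Sum>i=1..n+1. f (lam i)) - (\<Sum>i=1..n. f (mu i))
      = (\<Sum>v\<in>?V. f v * (real (mult_lam n lam v) - real (mult_mu n mu v)))"
    unfolding lam mu sum_subtractf[symmetric] by (simp add: right_diff_distrib)
  also have "\<dots> = (\<Sum>v\<in>?V. if is_W n lam mu v then f v else 0) - (\<Sum>v\<in>?V. if is_M n lam mu v then f v else 0)"
    unfolding mult_lam_minus_mult_mu sum_subtractf[symmetric] by (intro sum.cong) auto
  also have "\<dots> = sum f {v\<in>?V. is_W n lam mu v} - sum f {v\<in>?V. is_M n lam mu v}"
    by (simp only: sum.inter_filter[OF finV])
  also have "{v\<in>?V. is_W n lam mu v} = W_vals" using W_in_lam_vals by auto
  also have "{v\<in>?V. is_M n lam mu v} = M_vals" using M_in_mu_vals by auto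
  finally show ?thesis .
qed

lemma card_W_vals: "card W_vals = Suc (card M_vals)"
  using sum_lam_minus_sum_mu[of "\<lambda>_. 1"] by simp

lemma c_const_eq: "c_const n lam mu = \<Sum>W_vals - \<Sum>M_vals"
  using sum_lam_minus_sum_mu[of id] unfolding c_const_def by simp

lemma card_W_above_M:
  assumes "is_M n lam mu t"
  shows "card {l\<in>W_vals. t < l} = Suc (card {s\<in>M_vals. t < s})"
proof -
  let ?f = "\<lambda>x. if t < x then 1 else (0::real)"
  have "(\<Sum>i=1..n+1. ?f (lam i)) = real (count_lam (\<lambda>x. t < x))"
    "(\<Sum>i=1..n. ?f (mu i)) = real (count_mu (\<lambda>x. t < x))"
    "sum ?f W_vals = real (card {l\<in>W_vals. t < l})" "sum ?f M_vals = real (card {s\<in>M_vals. t < s})"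
    using finite_lam_vals finite_mu_vals unfolding count_lam_def count_mu_def
    by (subst sum.inter_filter[symmetric]; force)+
  then show ?thesis using sum_lam_minus_sum_mu[of ?f] count_lam_above_M[OF assms] by simp
qed

lemma r_coef_sq:
  assumes t: "t \<in> M_vals"
  shows "(r_coef n lam mu t)\<^sup>2 = - (\<Prod>l\<in>W_vals. (t - l)) / (\<Prod>s\<in>M_vals - {t}. (t - s))"
proof -
  let ?A = "\<Prod>l\<in>W_vals. (t - l)" and ?B = "\<Prod>s\<in>M_vals - {t}. (t - s)"
  have A0: "\<forall>l\<in>W_vals. t - l \<noteq> 0" and B0: "\<forall>s\<in>M_vals - {t}. t - s \<noteq> 0"
    using t shapes_exclusive by auto
  have fin: "finite W_vals" "finite (M_vals - {t})" using finite_lam_vals finite_mu_vals by auto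
  \<comment> \<open>The signs of the two products are given by the W- and M-values above \<open>t\<close>,
    and there is exactly one more of the former.\<close>
  have "0 < ?A \<longleftrightarrow> even (card {l\<in>W_vals. t < l})"
    using prod_pos_iff_even_card_neg[OF fin(1) A0] by (simp add: conj_commute)
  moreover have "0 < ?B \<longleftrightarrow> even (card {s\<in>M_vals. t < s})"
  proof -
    have "{s\<in>M_vals - {t}. t - s < 0} = {s\<in>M_vals. t < s}" by auto
    then show ?thesis using prod_pos_iff_even_card_neg[OF fin(2) B0] by simp
  qed
  moreover have "?A \<noteq> 0" "?B \<noteq> 0" using A0 B0 fin by auto
  ultimately have "?A / ?B < 0"
    using card_W_above_M t by (auto simp: divide_less_0_iff)
  moreover have "- ?A * (\<Prod>s\<in>M_vals - {t}. 1 / (t - s)) = - ?A / ?B"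
    by (simp add: prod_dividef)
  moreover have "{s\<in>mu_vals n mu. is_M n lam mu s \<and> s \<noteq> t} = M_vals - {t}" by auto
  ultimately show ?thesis using t unfolding r_coef_def by simp
qed

lemma r_coef_nonzero: "t \<in> M_vals \<Longrightarrow> r_coef n lam mu t \<noteq> 0"
  using r_coef_sq[of t] shapes_exclusive[of t] finite_lam_vals finite_mu_vals by auto

lemma r_coef_eq_0: "\<not> is_M n lam mu t \<Longrightarrow> r_coef n lam mu t = 0"
  unfolding r_coef_def by simp

text \<open>The sum in \<open>C_coef\<close> is a divided difference over the M-values, which vanishes
  against \<open>c_const\<close> at a W-value.\<close>

lemma C_coef_W:
  assumes w: "is_W n lam mu w"
  shows "C_coef n lam mu w = 0"
proof -
  have wW: "w \<in> W_vals" using w W_in_lam_vals by auto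
  have fin: "finite W_vals" "finite M_vals" using finite_lam_vals finite_mu_vals by auto
  let ?R = "W_vals - {w}"
  have "(r_coef n lam mu t)\<^sup>2 / (w - t) = (\<Prod>l\<in>?R. (t - l)) / (\<Prod>s\<in>M_vals - {t}. (t - s))"
    if t: "t \<in> M_vals" for t
  proof -
    have W_split: "(\<Prod>l\<in>W_vals. (t - l)) = (t - w) * (\<Prod>l\<in>?R. (t - l))"
      using wW fin by (simp add: prod.remove)
    have "w - t \<noteq> 0" "(\<Prod>s\<in>M_vals - {t}. (t - s)) \<noteq> 0"
      using t w shapes_exclusive fin by auto
    then show ?thesis unfolding r_coef_sq[OF t] W_split by (simp add: field_simps)
  qed
  then have "(\<Sum>t\<in>M_vals. (r_coef n lam mu t)\<^sup>2 / (w - t)) = divided_diff M_vals (\<lambda>x. \<Prod>l\<in>?R. (x - l))"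
    unfolding divided_diff_def by (intro sum.cong) auto
  also have "\<dots> = \<Sum>M_vals - \<Sum>?R"
    using divided_diff_prod_linear[of ?R M_vals] card_W_vals wW fin by simp
  also have "\<dots> = \<Sum>M_vals - \<Sum>W_vals + w"
    using wW fin by (simp add: sum_diff1)
  finally show ?thesis unfolding C_coef_def c_const_eq by simp
qed

abbreviation "first \<equiv> first_idx n mu"

lemma first_idx:
  assumes "m \<in> mu_vals n mu"
  shows "first m \<in> {1..n}" "mu (first m) = m" "\<And>j. j \<in> {1..n} \<Longrightarrow> mu j = m \<Longrightarrow> first m \<le> j"
proof -
  obtain j where j: "j \<in> {1..n}" "mu j = m" using assms unfolding mu_vals_def by auto
  have "first m \<in> {1..n} \<and> mu (first m) = m"
    unfolding first_idx_def by (rule LeastI[of _ j]) (use j in auto)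
  then show "first m \<in> {1..n}" "mu (first m) = m" by auto
  show "\<And>j. j \<in> {1..n} \<Longrightarrow> mu j = m \<Longrightarrow> first m \<le> j"
    unfolding first_idx_def by (rule Least_le) auto
qed

lemma mu_in_mu_vals: "j \<in> {1..n} \<Longrightarrow> mu j \<in> mu_vals n mu"
  unfolding mu_vals_def by auto

lemma mu_block:
  assumes m: "m \<in> mu_vals n mu"
  shows "{j\<in>{1..n}. mu j = m} = {first m..<first m + mult_mu n mu m}"
proof -
  let ?S = "{j\<in>{1..n}. mu j = m}"
  have fin: "finite ?S" by simp
  have f1: "first m \<in> {1..n}" and f2: "mu (first m) = m" and f_min: "\<And>j. j \<in> ?S \<Longrightarrow> first m \<le> j"
    using first_idx[OF m] by blast+
  define g where "g = Max ?S"
  have gS: "g \<in> ?S" unfolding g_def using fin f1 f2 by (intro Max_in) blast+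
  have g_max: "\<And>j. j \<in> ?S \<Longrightarrow> j \<le> g" unfolding g_def using fin by (intro Max_ge) blast+
  have g1: "g \<in> {1..n}" "mu g = m" using gS by blast+
  have S_eq: "?S = {first m..g}"
  proof (intro equalityI subsetI)
    fix j assume "j \<in> ?S"
    then show "j \<in> {first m..g}" using g_max f_min by simp
  next
    fix j assume j: "j \<in> {first m..g}"
    have j1: "j \<in> {1..n}" using j f1 g1 by simp
    have "mu j \<le> mu (first m)" using mu_antimono[of "first m" j] j j1 f1 by simp
    moreover have "mu g \<le> mu j" using mu_antimono[of j g] j j1 g1 by simp
    ultimately have "mu j = m" using f2 g1 by simp
    then show "j \<in> ?S" using j1 by simp
  qed
  have "first m \<le> g" using gS f_min by blast
  moreover have "mult_mu n mu m = card {first m..g}" unfolding mult_mu_def S_eq ..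
  ultimately have "first m + mult_mu n mu m = Suc g" by simp
  then show ?thesis unfolding S_eq by auto
qed

definition z_coord :: "nat \<Rightarrow> real" where
  "z_coord j = (if first (mu j) = j then r_coef n lam mu (mu j) else 0)"

lemma z_vec_eq: "z_vec n lam mu j = complex_of_real (z_coord j)"
  unfolding z_vec_def z_coord_def by simp

lemma z_coord_nonzero_iff:
  "j \<in> {1..n} \<Longrightarrow> z_coord j \<noteq> 0 \<longleftrightarrow> first (mu j) = j \<and> is_M n lam mu (mu j)"
  unfolding z_coord_def using r_coef_nonzero r_coef_eq_0 mu_in_mu_vals by auto

lemma sum_z_coord_sq:
  "(\<Sum>k=1..n. (z_coord k)\<^sup>2 * g (mu k)) = (\<Sum>t\<in>M_vals. (r_coef n lam mu t)\<^sup>2 * g t)"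
proof -
  let ?F = "{k\<in>{1..n}. first (mu k) = k}"
  have "(\<Sum>k=1..n. (z_coord k)\<^sup>2 * g (mu k))
      = (\<Sum>k=1..n. if first (mu k) = k then (r_coef n lam mu (mu k))\<^sup>2 * g (mu k) else 0)"
    unfolding z_coord_def by (intro sum.cong) auto
  also have "\<dots> = (\<Sum>k\<in>?F. (r_coef n lam mu (mu k))\<^sup>2 * g (mu k))"
    by (rule sum.inter_filter[symmetric]) simp
  also have "\<dots> = (\<Sum>t\<in>mu ` ?F. (r_coef n lam mu t)\<^sup>2 * g t)"
  proof (rule sum.reindex[symmetric, unfolded comp_def], rule inj_onI)
    fix x y assume "x \<in> ?F" "y \<in> ?F" "mu x = mu y"
    then have "first (mu x) = x" "first (mu y) = y" "mu x = mu y" by auto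
    then show "x = y" by metis
  qed
  also have "mu ` ?F = mu_vals n mu"
  proof
    show "mu ` ?F \<subseteq> mu_vals n mu" unfolding mu_vals_def by auto
    show "mu_vals n mu \<subseteq> mu ` ?F"
    proof
      fix m assume m: "m \<in> mu_vals n mu"
      then have "first m \<in> ?F" using first_idx[OF m] by auto
      then show "m \<in> mu ` ?F" using first_idx(2)[OF m] by force
    qed
  qed
  also have "(\<Sum>t\<in>mu_vals n mu. (r_coef n lam mu t)\<^sup>2 * g t) = (\<Sum>t\<in>M_vals. (r_coef n lam mu t)\<^sup>2 * g t)"
    by (rule sum.mono_neutral_right) (auto simp: finite_mu_vals r_coef_eq_0)
  finally show ?thesis .
qed

section \<open>The point \<open>p\<close> and the orthogonal complement of the \<open>K\<close>-orbit\<close>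

abbreviation "p \<equiv> p_tilde n lam mu"

lemma p_tilde_carrier: "p \<in> carrier_mat (n+1) (n+1)"
  unfolding p_tilde_def by simp

lemma index_p_tilde:
  assumes "i < n+1" "j < n+1"
  shows "p $$ (i,j) = (if i = 0 \<and> j = 0 then complex_of_real (c_const n lam mu)
     else if i = 0 then complex_of_real (z_coord j)
     else if j = 0 then complex_of_real (z_coord i)
     else if i = j then complex_of_real (mu i) else 0)"
  using assms unfolding p_tilde_def by (simp add: z_vec_eq)

lemma p_tilde_hermitian: "i < n+1 \<Longrightarrow> j < n+1 \<Longrightarrow> p $$ (i,j) = cnj (p $$ (j,i))"
  by (simp add: index_p_tilde)

lemma index_comm_p_tilde_block:
  assumes X: "X \<in> carrier_mat (n+1) (n+1)" and i: "i \<in> {1..n}" and j: "j \<in> {1..n}"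
  shows "comm X p $$ (i,j) = X $$ (i,0) * z_coord j + X $$ (i,j) * mu j
      - z_coord i * X $$ (0,j) - mu i * X $$ (i,j)"
proof -
  have "(\<Sum>k<n+1. X $$ (i,k) * p $$ (k,j))
      = X $$ (i,0) * z_coord j + (\<Sum>k=1..n. if k = j then X $$ (i,k) * mu j else 0)"
    unfolding Suc_eq_plus1[symmetric] sum_lessThan_Suc_eq_0_plus
    using j by (intro arg_cong2[where f = "(+)"] sum.cong) (auto simp: index_p_tilde)
  also have "\<dots> = X $$ (i,0) * z_coord j + X $$ (i,j) * mu j" using j by (simp add: sum.delta)
  finally have Xp: "(\<Sum>k<n+1. X $$ (i,k) * p $$ (k,j)) = X $$ (i,0) * z_coord j + X $$ (i,j) * mu j" .
  have "(\<Sum>k<n+1. p $$ (i,k) * X $$ (k,j))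
      = z_coord i * X $$ (0,j) + (\<Sum>k=1..n. if k = i then mu i * X $$ (k,j) else 0)"
    unfolding Suc_eq_plus1[symmetric] sum_lessThan_Suc_eq_0_plus
    using i by (intro arg_cong2[where f = "(+)"] sum.cong) (auto simp: index_p_tilde)
  also have "\<dots> = z_coord i * X $$ (0,j) + mu i * X $$ (i,j)" using i by (simp add: sum.delta)
  finally have pX: "(\<Sum>k<n+1. p $$ (i,k) * X $$ (k,j)) = z_coord i * X $$ (0,j) + mu i * X $$ (i,j)" .
  have ij: "i < n+1" "j < n+1" using i j by auto
  show ?thesis unfolding index_comm_sum[OF X p_tilde_carrier ij] Xp pX by simp
qed

lemma index_comm_p_tilde_col0:
  assumes X: "X \<in> carrier_mat (n+1) (n+1)" and i: "i \<in> {1..n}"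
  shows "comm X p $$ (i,0) = X $$ (i,0) * c_const n lam mu + (\<Sum>k=1..n. X $$ (i,k) * z_coord k)
      - z_coord i * X $$ (0,0) - mu i * X $$ (i,0)"
proof -
  have Xp: "(\<Sum>k<n+1. X $$ (i,k) * p $$ (k,0))
      = X $$ (i,0) * c_const n lam mu + (\<Sum>k=1..n. X $$ (i,k) * z_coord k)"
    unfolding Suc_eq_plus1[symmetric] sum_lessThan_Suc_eq_0_plus
    by (intro arg_cong2[where f = "(+)"] sum.cong) (auto simp: index_p_tilde)
  have "(\<Sum>k<n+1. p $$ (i,k) * X $$ (k,0))
      = z_coord i * X $$ (0,0) + (\<Sum>k=1..n. if k = i then mu i * X $$ (k,0) else 0)"
    unfolding Suc_eq_plus1[symmetric] sum_lessThan_Suc_eq_0_plus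
    using i by (intro arg_cong2[where f = "(+)"] sum.cong) (auto simp: index_p_tilde)
  also have "\<dots> = z_coord i * X $$ (0,0) + mu i * X $$ (i,0)" using i by (simp add: sum.delta)
  finally have pX: "(\<Sum>k<n+1. p $$ (i,k) * X $$ (k,0)) = z_coord i * X $$ (0,0) + mu i * X $$ (i,0)" .
  have i0: "i < n+1" "0 < n+1" using i by auto
  show ?thesis unfolding index_comm_sum[OF X p_tilde_carrier i0] Xp pX by simp
qed

lemma skew_unit_k_alg:
  assumes J: "J \<in> {1..n}" and K: "K \<in> {1..n}"
  shows "skew_unit (n+1) J K al \<in> k_alg n"
proof -
  let ?k = "skew_unit n (J - 1) (K - 1) al"
  let ?B = "four_block_mat (0\<^sub>m 1 1) (0\<^sub>m 1 n) (0\<^sub>m n 1) ?k"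
  have B: "?B \<in> carrier_mat (n+1) (n+1)"
    using four_block_carrier_mat[of "0\<^sub>m 1 1" 1 1 ?k n n "0\<^sub>m 1 n" "0\<^sub>m n 1"] skew_unit_carrier
    by simp
  have "skew_unit (n+1) J K al = ?B"
  proof (rule eq_matI)
    fix i k assume "i < dim_row ?B" "k < dim_col ?B"
    then have ik: "i < n+1" "k < n+1" using B by auto
    have "?B $$ (i,k) = (if i = 0 \<or> k = 0 then 0 else ?k $$ (i - 1, k - 1))"
      using ik by (subst index_mat_four_block) simp_all
    also have "\<dots> = skew_unit (n+1) J K al $$ (i,k)"
    proof (cases "i = 0 \<or> k = 0")
      case True
      then have "\<not> (i = J \<and> k = K)" "\<not> (i = K \<and> k = J)" using J K by auto
      then show ?thesis unfolding index_skew_unit[OF ik] by (simp only: True if_True if_False add_0_right)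
    next
      case False
      then have "i - 1 < n" "k - 1 < n" "(i - 1 = J - 1) = (i = J)" "(i - 1 = K - 1) = (i = K)"
        "(k - 1 = J - 1) = (k = J)" "(k - 1 = K - 1) = (k = K)" using ik J K by auto
      then have "?k $$ (i - 1, k - 1) = skew_unit (n+1) J K al $$ (i,k)"
        unfolding index_skew_unit[OF ik] by (simp only: index_skew_unit)
      then show ?thesis using False by (simp only: if_False)
    qed
    finally show "skew_unit (n+1) J K al $$ (i,k) = ?B $$ (i,k)" ..
  qed (use B in simp_all)
  then show ?thesis unfolding k_alg_def using skew_unit_u_alg by blast
qed

text \<open>Pairing \<open>[X, p]\<close> with \<open>[\<xi>, p]\<close> for \<open>\<xi> = diag(0, k)\<close>, \<open>k\<close> supported at \<open>(J, K)\<close>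
  and \<open>(K, J)\<close> with coefficient \<open>1\<close> or \<open>\<i>\<close>, isolates the entry \<open>(J, K)\<close>.\<close>

lemma tangent_K_perp_block_zero:
  assumes a: "comm X p \<in> tangent_K_perp n p" and X: "X \<in> u_alg (n+1)"
    and J: "J \<in> {1..n}" and K: "K \<in> {1..n}"
  shows "comm X p $$ (J,K) = 0"
proof -
  let ?a = "comm X p"
  have Xc: "X \<in> carrier_mat (n+1) (n+1)" using X by (rule u_alg_carrier)
  have ac: "?a \<in> carrier_mat (n+1) (n+1)" using Xc p_tilde_carrier by (rule comm_carrier)
  have "mtrace (?a * skew_unit (n+1) J K al) = 0" for al
  proof -
    have "comm (skew_unit (n+1) J K al) p \<in> tangent_K_orbit n p"
      unfolding tangent_K_orbit_def using skew_unit_k_alg[OF J K] by blast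
    then have "omega_KKS p ?a (comm (skew_unit (n+1) J K al) p) = 0"
      using a unfolding tangent_K_perp_def by blast
    then have "mtrace (X * comm (skew_unit (n+1) J K al) p) = 0"
      unfolding omega_KKS_comm[OF p_tilde_carrier X skew_unit_u_alg] by simp
    then show ?thesis
      using mtrace_mult_comm_swap[OF p_tilde_carrier Xc skew_unit_carrier] by simp
  qed
  then have pair: "?a $$ (K,J) * al - ?a $$ (J,K) * cnj al = 0" for al
    using mtrace_mult_skew_unit[OF ac, of J K al] J K by simp
  have "?a $$ (K,J) = ?a $$ (J,K)" using pair[of 1] by simp
  moreover have "(?a $$ (K,J) + ?a $$ (J,K)) * \<i> = 0" using pair[of \<i>] by (simp add: algebra_simps)
  ultimately have "2 * ?a $$ (J,K) = 0" by simp
  then show ?thesis by simp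
qed

definition perp_generator :: "complex mat \<Rightarrow> bool" where
  "perp_generator X \<longleftrightarrow> X \<in> u_alg (n+1) \<and> (\<forall>i\<in>{1..n}. \<forall>j\<in>{1..n}. comm X p $$ (i,j) = 0)"

lemma perp_generatorI:
  "X \<in> u_alg (n+1) \<Longrightarrow> comm X p \<in> tangent_K_perp n p \<Longrightarrow> perp_generator X"
  unfolding perp_generator_def using tangent_K_perp_block_zero by blast

lemma perp_generatorD:
  assumes "perp_generator X"
  shows "X \<in> u_alg (n+1)" "X \<in> carrier_mat (n+1) (n+1)"
    and "\<And>i j. i \<in> {1..n} \<Longrightarrow> j \<in> {1..n}
      \<Longrightarrow> X $$ (i,0) * z_coord j + X $$ (i,j) * mu j - z_coord i * X $$ (0,j) - mu i * X $$ (i,j) = 0"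
  using assms u_alg_carrier index_comm_p_tilde_block unfolding perp_generator_def by auto

lemma perp_generator_first_col_M_nonfirst:
  assumes X: "perp_generator X" and j: "j \<in> {1..n}"
    and M: "is_M n lam mu (mu j)" and nf: "first (mu j) \<noteq> j"
  shows "X $$ (j,0) = 0"
proof -
  define k where "k = first (mu j)"
  have k: "k \<in> {1..n}" "mu k = mu j" using first_idx[OF mu_in_mu_vals[OF j]] unfolding k_def by auto
  then have "z_coord k \<noteq> 0" using M z_coord_nonzero_iff unfolding k_def by simp
  moreover have "z_coord j = 0" using nf z_coord_nonzero_iff[OF j] by simp
  moreover have "X $$ (j,0) * z_coord k + X $$ (j,k) * mu k - z_coord j * X $$ (0,k) - mu j * X $$ (j,k) = 0"
    by (rule perp_generatorD(3)[OF X j k(1)])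
  ultimately show ?thesis using k(2) by (simp add: algebra_simps)
qed

lemma perp_generator_first_col_M_first:
  assumes X: "perp_generator X" and j: "j \<in> {1..n}"
    and M: "is_M n lam mu (mu j)" and f: "first (mu j) = j"
  shows "Re (X $$ (j,0)) = 0"
proof -
  have zj: "z_coord j \<noteq> 0" using z_coord_nonzero_iff[OF j] M f by simp
  have sk: "X $$ (0,j) = - cnj (X $$ (j,0))" using u_alg_skew[OF perp_generatorD(1)[OF X], of 0 j] j by simp
  have "X $$ (j,0) * z_coord j + X $$ (j,j) * mu j - z_coord j * X $$ (0,j) - mu j * X $$ (j,j) = 0"
    by (rule perp_generatorD(3)[OF X j j])
  then have "z_coord j * (X $$ (j,0) + cnj (X $$ (j,0))) = 0" unfolding sk by (simp add: algebra_simps)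
  then have "X $$ (j,0) + cnj (X $$ (j,0)) = 0" using zj by simp
  then show ?thesis by (simp add: complex_eq_iff)
qed

text \<open>Away from M-values, the block equations express \<open>X\<^sub>j\<^sub>k z\<^sub>k\<close> through \<open>X\<^sub>j\<^sub>0\<close>,
  and the first column of \<open>[X, p]\<close> becomes a multiple of that of \<open>X\<close>.\<close>

lemma perp_generator_comm_first_col:
  assumes X: "perp_generator X" and j: "j \<in> {1..n}" and nM: "\<not> is_M n lam mu (mu j)"
  shows "comm X p $$ (j,0) = C_coef n lam mu (mu j) * X $$ (j,0)"
proof -
  have zj: "z_coord j = 0" using z_coord_nonzero_iff[OF j] nM by simp
  have X_z: "X $$ (j,k) * z_coord k = X $$ (j,0) * complex_of_real ((z_coord k)\<^sup>2 * (1 / (mu j - mu k)))"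
    if k: "k \<in> {1..n}" for k
  proof (cases "z_coord k = 0")
    case False
    then have "is_M n lam mu (mu k)" using z_coord_nonzero_iff[OF k] by blast
    then have d: "complex_of_real (mu j - mu k) \<noteq> 0" using nM by auto
    have "X $$ (j,0) * z_coord k + X $$ (j,k) * mu k - z_coord j * X $$ (0,k) - mu j * X $$ (j,k) = 0"
      by (rule perp_generatorD(3)[OF X j k])
    then have "X $$ (j,k) * complex_of_real (mu j - mu k) = X $$ (j,0) * z_coord k"
      using zj by (simp add: algebra_simps)
    then have "X $$ (j,k) = X $$ (j,0) * z_coord k / complex_of_real (mu j - mu k)"
      using d by (simp add: eq_divide_eq)
    then show ?thesis by (simp add: power2_eq_square)
  qed simp
  have "(\<Sum>k=1..n. X $$ (j,k) * z_coord k)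
      = X $$ (j,0) * complex_of_real (\<Sum>k=1..n. (z_coord k)\<^sup>2 * (1 / (mu j - mu k)))"
    by (simp add: X_z sum_distrib_left)
  also have "(\<Sum>k=1..n. (z_coord k)\<^sup>2 * (1 / (mu j - mu k)))
      = (\<Sum>t\<in>M_vals. (r_coef n lam mu t)\<^sup>2 * (1 / (mu j - t)))"
    by (rule sum_z_coord_sq)
  finally have "(\<Sum>k=1..n. X $$ (j,k) * z_coord k)
      = X $$ (j,0) * complex_of_real (\<Sum>t\<in>M_vals. (r_coef n lam mu t)\<^sup>2 / (mu j - t))" by simp
  then show ?thesis
    unfolding index_comm_p_tilde_col0[OF perp_generatorD(2)[OF X] j] C_coef_def zj
    by (simp add: algebra_simps)
qed

lemma perp_generator_comm_first_col_M_first: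
  assumes X: "perp_generator X" and j: "j \<in> {1..n}"
    and M: "is_M n lam mu (mu j)" and f: "first (mu j) = j"
  shows "Re (comm X p $$ (j,0)) = 0"
proof -
  have Xu: "X \<in> u_alg (n+1)" using perp_generatorD(1)[OF X] .
  have rj: "Re (X $$ (j,0)) = 0" by (rule perp_generator_first_col_M_first[OF X j M f])
  have Re_X_z: "Re (X $$ (j,k) * z_coord k) = 0" if k: "k \<in> {1..n}" for k
  proof (cases "z_coord k = 0")
    case False
    then have Mk: "is_M n lam mu (mu k)" and fk: "first (mu k) = k"
      using z_coord_nonzero_iff[OF k] by blast+
    have "Re (X $$ (j,k)) = 0"
    proof (cases "k = j")
      case True then show ?thesis using u_alg_diag_Re[OF Xu] j by simp
    next
      case False
      then have d: "mu k - mu j \<noteq> 0" using f fk by auto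
      have rk: "Re (X $$ (k,0)) = 0" by (rule perp_generator_first_col_M_first[OF X k Mk fk])
      have sk: "X $$ (0,k) = - cnj (X $$ (k,0))" using u_alg_skew[OF Xu, of 0 k] k by simp
      have "Re (X $$ (j,0) * z_coord k + X $$ (j,k) * mu k - z_coord j * X $$ (0,k) - mu j * X $$ (j,k)) = 0"
        using perp_generatorD(3)[OF X j k] by simp
      then have "Re (X $$ (j,k)) * (mu k - mu j) = 0" using rj rk unfolding sk by (simp add: algebra_simps)
      then show ?thesis using d by simp
    qed
    then show ?thesis by simp
  qed simp
  have "Re (\<Sum>k=1..n. X $$ (j,k) * z_coord k) = (\<Sum>k=1..n. Re (X $$ (j,k) * z_coord k))"
    by (rule Re_sum)
  also have "\<dots> = 0" by (rule sum.neutral) (use Re_X_z in blast)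
  finally have "Re (\<Sum>k=1..n. X $$ (j,k) * z_coord k) = 0" .
  moreover have "Re (X $$ (0,0)) = 0" using u_alg_diag_Re[OF Xu] by simp
  ultimately show ?thesis
    unfolding index_comm_p_tilde_col0[OF perp_generatorD(2)[OF X] j] using rj by simp
qed

section \<open>The form on the slice\<close>

lemma perp_generator_comm_00:
  assumes Y: "perp_generator Y"
  shows "comm Y p $$ (0,0) = 0"
proof -
  let ?b = "comm Y p"
  have Yc: "Y \<in> carrier_mat (n+1) (n+1)" using perp_generatorD(2)[OF Y] .
  have "mtrace ?b = (\<Sum>i<Suc n. ?b $$ (i,i))"
    unfolding mtrace_def using comm_carrier[OF Yc p_tilde_carrier] by simp
  also have "\<dots> = ?b $$ (0,0) + (\<Sum>i=1..n. ?b $$ (i,i))" by (rule sum_lessThan_Suc_eq_0_plus)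
  also have "(\<Sum>i=1..n. ?b $$ (i,i)) = 0"
    by (rule sum.neutral) (use Y in \<open>simp add: perp_generator_def\<close>)
  finally show ?thesis using mtrace_comm[OF Yc p_tilde_carrier] by simp
qed

text \<open>With the lower-right block of \<open>[Y, p]\<close> zero and its trace zero, only the first row
  and column of \<open>X\<close> meet \<open>[Y, p]\<close>.\<close>

lemma mtrace_perp_generators:
  assumes X: "perp_generator X" and Y: "perp_generator Y"
  shows "mtrace (X * comm Y p)
    = (\<Sum>j=1..n. X $$ (j,0) * cnj (comm Y p $$ (j,0)) - cnj (X $$ (j,0)) * comm Y p $$ (j,0))"
proof -
  let ?b = "comm Y p"
  have Xc: "X \<in> carrier_mat (n+1) (n+1)" and Yc: "Y \<in> carrier_mat (n+1) (n+1)"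
    and Xu: "X \<in> u_alg (n+1)" and Yu: "Y \<in> u_alg (n+1)" using perp_generatorD X Y by blast+
  have bc: "?b \<in> carrier_mat (n+1) (n+1)" using Yc p_tilde_carrier by (rule comm_carrier)
  have bz: "\<And>i k. i \<in> {1..n} \<Longrightarrow> k \<in> {1..n} \<Longrightarrow> ?b $$ (i,k) = 0"
    using Y unfolding perp_generator_def by blast
  have bh: "?b $$ (0,i) = cnj (?b $$ (i,0))" if "i \<in> {1..n}" for i
    using comm_u_alg_hermitian[OF Yu p_tilde_carrier p_tilde_hermitian, of 0 i] that by simp
  have row0: "(\<Sum>k<Suc n. X $$ (0,k) * ?b $$ (k,0)) = (\<Sum>k=1..n. - cnj (X $$ (k,0)) * ?b $$ (k,0))"
  proof -
    have "(\<Sum>k<Suc n. X $$ (0,k) * ?b $$ (k,0)) = X $$ (0,0) * ?b $$ (0,0) + (\<Sum>k=1..n. X $$ (0,k) * ?b $$ (k,0))"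
      by (rule sum_lessThan_Suc_eq_0_plus)
    also have "(\<Sum>k=1..n. X $$ (0,k) * ?b $$ (k,0)) = (\<Sum>k=1..n. - cnj (X $$ (k,0)) * ?b $$ (k,0))"
      using u_alg_skew[OF Xu, of 0] by (intro sum.cong) auto
    finally show ?thesis using perp_generator_comm_00[OF Y] by simp
  qed
  have row_i: "(\<Sum>k<Suc n. X $$ (i,k) * ?b $$ (k,i)) = X $$ (i,0) * cnj (?b $$ (i,0))"
    if i: "i \<in> {1..n}" for i
  proof -
    have "(\<Sum>k<Suc n. X $$ (i,k) * ?b $$ (k,i)) = X $$ (i,0) * ?b $$ (0,i) + (\<Sum>k=1..n. X $$ (i,k) * ?b $$ (k,i))"
      by (rule sum_lessThan_Suc_eq_0_plus)
    also have "(\<Sum>k=1..n. X $$ (i,k) * ?b $$ (k,i)) = 0"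
      by (rule sum.neutral) (use bz i in simp)
    finally show ?thesis using bh[OF i] by simp
  qed
  have "mtrace (X * ?b) = (\<Sum>i<Suc n. \<Sum>k<Suc n. X $$ (i,k) * ?b $$ (k,i))"
    using mtrace_mult[OF Xc bc] by simp
  also have "\<dots> = (\<Sum>k<Suc n. X $$ (0,k) * ?b $$ (k,0)) + (\<Sum>i=1..n. \<Sum>k<Suc n. X $$ (i,k) * ?b $$ (k,i))"
    by (rule sum_lessThan_Suc_eq_0_plus)
  also have "(\<Sum>i=1..n. \<Sum>k<Suc n. X $$ (i,k) * ?b $$ (k,i)) = (\<Sum>i=1..n. X $$ (i,0) * cnj (?b $$ (i,0)))"
    by (rule sum.cong[OF refl]) (rule row_i)
  finally show ?thesis
    unfolding row0 by (simp add: sum_subtractf sum_negf[symmetric] sum.distrib[symmetric])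
qed

text \<open>At a W-value \<open>C\<close> vanishes, so the first column of \<open>[Y, p]\<close> does; at an M-value
  both first columns are imaginary, or that of \<open>X\<close> vanishes.\<close>

lemma perp_generators_first_col_term:
  assumes X: "perp_generator X" and Y: "perp_generator Y" and j: "j \<in> {1..n}"
  shows "X $$ (j,0) * cnj (comm Y p $$ (j,0)) - cnj (X $$ (j,0)) * comm Y p $$ (j,0)
    = (if is_P n lam mu (mu j) then (cnj (comm Y p $$ (j,0)) * comm X p $$ (j,0)
         - cnj (comm X p $$ (j,0)) * comm Y p $$ (j,0)) / complex_of_real (C_coef n lam mu (mu j))
       else 0)"
proof -
  consider "is_M n lam mu (mu j)" | "is_W n lam mu (mu j)" | "is_P n lam mu (mu j)"
    using shape_cases by blast
  then show ?thesis
  proof cases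
    case 1
    then have nP: "\<not> is_P n lam mu (mu j)" using shapes_exclusive by blast
    show ?thesis
    proof (cases "first (mu j) = j")
      case True
      have "Re (X $$ (j,0)) = 0" by (rule perp_generator_first_col_M_first[OF X j 1 True])
      moreover have "Re (comm Y p $$ (j,0)) = 0" by (rule perp_generator_comm_first_col_M_first[OF Y j 1 True])
      ultimately show ?thesis using nP by (simp add: complex_eq_iff)
    next
      case False
      then have "X $$ (j,0) = 0" by (rule perp_generator_first_col_M_nonfirst[OF X j 1])
      then show ?thesis using nP by simp
    qed
  next
    case 2
    then have "\<not> is_P n lam mu (mu j)" "\<not> is_M n lam mu (mu j)" using shapes_exclusive by blast+
    moreover have "C_coef n lam mu (mu j) = 0" by (rule C_coef_W[OF 2])
    ultimately show ?thesis using perp_generator_comm_first_col[OF Y j] by simp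
  next
    case 3
    then have "\<not> is_M n lam mu (mu j)" using shapes_exclusive by blast
    then have "comm X p $$ (j,0) = C_coef n lam mu (mu j) * X $$ (j,0)"
      "comm Y p $$ (j,0) = C_coef n lam mu (mu j) * Y $$ (j,0)"
      using perp_generator_comm_first_col[OF X j] perp_generator_comm_first_col[OF Y j] by blast+
    then show ?thesis
      using 3 by (cases "C_coef n lam mu (mu j) = 0") (simp_all add: field_simps)
  qed
qed

lemma sum_P_blocks:
  "(\<Sum>j=1..n. if is_P n lam mu (mu j) then h j else 0)
    = (\<Sum>m\<in>{m\<in>mu_vals n mu. is_P n lam mu m}. \<Sum>k<mult_mu n mu m. h (first m + k))"
proof -
  let ?J = "{j\<in>{1..n}. is_P n lam mu (mu j)}"
  have "(\<Sum>j=1..n. if is_P n lam mu (mu j) then h j else 0) = sum h ?J"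
    by (rule sum.inter_filter[symmetric]) simp
  also have "\<dots> = (\<Sum>m\<in>mu ` ?J. sum h {j\<in>?J. mu j = m})"
    by (rule sum.image_gen) simp
  also have "mu ` ?J = {m\<in>mu_vals n mu. is_P n lam mu m}" unfolding mu_vals_def by auto
  also have "(\<Sum>m\<in>{m\<in>mu_vals n mu. is_P n lam mu m}. sum h {j\<in>?J. mu j = m})
     = (\<Sum>m\<in>{m\<in>mu_vals n mu. is_P n lam mu m}. \<Sum>k<mult_mu n mu m. h (first m + k))"
  proof (rule sum.cong)
    fix m assume m: "m \<in> {m\<in>mu_vals n mu. is_P n lam mu m}"
    then have "{j\<in>?J. mu j = m} = {j\<in>{1..n}. mu j = m}" by auto
    also have "\<dots> = {first m..<first m + mult_mu n mu m}" using m mu_block by blast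
    finally have block: "{j\<in>?J. mu j = m} = {first m..<first m + mult_mu n mu m}" .
    show "sum h {j\<in>?J. mu j = m} = (\<Sum>k<mult_mu n mu m. h (first m + k))"
      unfolding block using sum.shift_bounds_nat_ivl[of h 0 "first m" "mult_mu n mu m"]
      by (simp add: atLeast0LessThan add.commute)
  qed simp
  finally show ?thesis .
qed

lemma omega_W_Psi:
  "omega_W n lam mu (Psi n lam mu a) (Psi n lam mu b) = (1 / \<i>) *
    (\<Sum>m\<in>{m\<in>mu_vals n mu. is_P n lam mu m}. \<Sum>k<mult_mu n mu m.
       (cnj (b $$ (first m + k, 0)) * a $$ (first m + k, 0) - cnj (a $$ (first m + k, 0)) * b $$ (first m + k, 0))
       / complex_of_real (C_coef n lam mu (mu (first m + k))))"
  unfolding omega_W_def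
proof (intro arg_cong2[where f="(*)"] refl sum.cong)
  fix m assume m: "m \<in> {m\<in>mu_vals n mu. is_P n lam mu m}"
  have mk: "mu (first m + k) = m" if "k < mult_mu n mu m" for k
  proof -
    have "first m + k \<in> {first m..<first m + mult_mu n mu m}" using that by simp
    then show ?thesis using mu_block[of m] m by blast
  qed
  have Psi: "Psi n lam mu a m = vec (mult_mu n mu m) (\<lambda>k. a $$ (first m + k, 0))"
    "Psi n lam mu b m = vec (mult_mu n mu m) (\<lambda>k. b $$ (first m + k, 0))"
    unfolding Psi_def using m by simp_all
  show "(- cdot (Psi n lam mu a m) (Psi n lam mu b m) + cdot (Psi n lam mu b m) (Psi n lam mu a m)) /
        complex_of_real (C_coef n lam mu m) =
    (\<Sum>k<mult_mu n mu m.
       (cnj (b $$ (first m + k, 0)) * a $$ (first m + k, 0) - cnj (a $$ (first m + k, 0)) * b $$ (first m + k, 0))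
       / complex_of_real (C_coef n lam mu (mu (first m + k))))"
    unfolding Psi cdot_def by (simp add: mk sum_divide_distrib[symmetric] sum_subtractf)
qed

end

theorem proposition4p7:
  fixes n :: nat and lam mu :: "nat \<Rightarrow> real"
  assumes "n \<ge> 1"
    and "interlacing n lam mu"
  shows "\<forall>a \<in> tangent_K_perp n (p_tilde n lam mu). \<forall>b \<in> tangent_K_perp n (p_tilde n lam mu).
           omega_KKS (p_tilde n lam mu) a b
             = omega_W n lam mu (Psi n lam mu a) (Psi n lam mu b)"
proof (intro ballI)
  interpret interlacing_pair n lam mu by unfold_locales (rule assms(2))
  fix a b assume a: "a \<in> tangent_K_perp n p" and b: "b \<in> tangent_K_perp n p"
  obtain X where X: "X \<in> u_alg (n+1)" "a = comm X p"
    using a p_tilde_carrier unfolding tangent_K_perp_def tangent_orbit_def by auto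
  obtain Y where Y: "Y \<in> u_alg (n+1)" "b = comm Y p"
    using b p_tilde_carrier unfolding tangent_K_perp_def tangent_orbit_def by auto
  have gX: "perp_generator X" and gY: "perp_generator Y"
    using perp_generatorI X Y a b by auto
  let ?h = "\<lambda>j. (cnj (b $$ (j,0)) * a $$ (j,0) - cnj (a $$ (j,0)) * b $$ (j,0))
     / complex_of_real (C_coef n lam mu (mu j))"
  have "omega_KKS p a b = (1 / \<i>) * mtrace (X * comm Y p)"
    unfolding X(2) Y(2) by (rule omega_KKS_comm[OF p_tilde_carrier X(1) Y(1)])
  also have "mtrace (X * comm Y p) = (\<Sum>j=1..n. if is_P n lam mu (mu j) then ?h j else 0)"
    unfolding mtrace_perp_generators[OF gX gY] X(2) Y(2)
    by (intro sum.cong) (simp_all add: perp_generators_first_col_term[OF gX gY])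
  also have "\<dots> = (\<Sum>m\<in>{m\<in>mu_vals n mu. is_P n lam mu m}. \<Sum>k<mult_mu n mu m. ?h (first m + k))"
    by (rule sum_P_blocks)
  finally show "omega_KKS p a b = omega_W n lam mu (Psi n lam mu a) (Psi n lam mu b)"
    unfolding omega_W_Psi .
qed

end
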